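(* Let $H$ be a connected graph on vertex set $\{1,\dots,r\}$ and, for each $i\in\{1,\dots,r\}$, let $G_i$ be a $d_i$-regular graph of order $n_i$ with adjacency eigenvalues $d_i=\lambda_1(A(G_i)),\lambda_2(A(G_i)),\dots,\lambda_{n_i}(A(G_i))$. Let $G=\bigvee_H\{G_i:1\le i\le r\}$ and $N_i=\sum_{j\in N_H(i)}n_j$. For $s\in\mathbb{R}$, let $M_i(s)=(s^2(d_i+N_i-1)+1)I_{n_i}-sA(G_i)$, so that $\sigma(M_i(s))=\{s^2(d_i+N_i-1)-s\lambda_k(A(G_i))+1\}_{k=1}^{n_i}$, and $\lambda_1(M_i(s))=s^2(d_i+N_i-1)-sd_i+1$. Let $F_r(s)$ be the $r\times r$ symmetric matrix with diagonal entries $(F_r(s))_{ii}=\lambda_1(M_i(s))$ and off-diagonal entries $(F_r(s))_{ij}=\delta_{ij}\sqrt{n_in_j}$, where $\delta_{ij}=-s$ if $ij\in E(H)$ and $\delta_{ij}=0$ otherwise. Then, as multisets, $$\sigma(M_G(s))=\bigcup_{i=1}^r\big(\sigma(M_i(s))-\{\lambda_1(M_i(s))\}\big)\cup\sigma(F_r(s)),$$ where $\sigma(M_i(s))-\{\lambda_1(M_i(s))\}$ denotes the multiset $\{s^2(d_i+N_i-1)-s\lambda_k(A(G_i))+1\}_{k=2}^{n_i}$.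
   Context: For a simple undirected graph $G$ on $n$ vertices with adjacency matrix $A$, diagonal degree matrix $D$ and identity $I$, and real $s$, the deformed Laplacian matrix is $M_G(s)=I-sA+s^2(D-I)$; $\sigma(\cdot)$ is the multiset of eigenvalues. $H$-join: given a graph $H$ on vertex set $\{1,\dots,r\}$ and pairwise vertex-disjoint graphs $G_1,\dots,G_r$, the graph $G=\bigvee_H\{G_i:1\le i\le r\}$ has vertex set $\bigcup_i V(G_i)$ and edge set $\bigcup_iE(G_i)\cup\bigcup_{ij\in E(H)}\{uv:u\in V(G_i),v\in V(G_j)\}$. $N_H(i)$ is the set of neighbours of $i$ in $H$. *)

theory Defs
  imports "Jordan_Normal_Form.Char_Poly" "HOL-Library.Multiset"
begin

text \<open>To use the library's matrices we
  enumerate V by an (arbitrary) bijection from {0..<card V}; the spectrum is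
  independent of the chosen enumeration.\<close>

definition vertex_enum :: "'v set \<Rightarrow> nat \<Rightarrow> 'v" where
  "vertex_enum V = (SOME f. bij_betw f {..<card V} V)"

definition mat_on :: "'v set \<Rightarrow> ('v \<Rightarrow> 'v \<Rightarrow> real) \<Rightarrow> real mat" where
  "mat_on V M = mat (card V) (card V) (\<lambda>(a, b). M (vertex_enum V a) (vertex_enum V b))"

text \<open>All matrices
  used below are real symmetric, so this is the full spectrum.\<close>

definition spec_on :: "'v set \<Rightarrow> ('v \<Rightarrow> 'v \<Rightarrow> real) \<Rightarrow> real multiset" where
  "spec_on V M = proots (char_poly (mat_on V M))"

definition simple_graph :: "'v set \<Rightarrow> ('v \<Rightarrow> 'v \<Rightarrow> bool) \<Rightarrow> bool" where
  "simple_graph V E \<longleftrightarrow> finite V \<and> (\<forall>u\<in>V. \<forall>v\<in>V. E u v \<longleftrightarrow> E v u) \<and> (\<forall>v\<in>V. \<not> E v v)"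

definition adj_mat :: "'v set \<Rightarrow> ('v \<Rightarrow> 'v \<Rightarrow> bool) \<Rightarrow> 'v \<Rightarrow> 'v \<Rightarrow> real" where
  "adj_mat V E u v = (if E u v then 1 else 0)"

definition degree :: "'v set \<Rightarrow> ('v \<Rightarrow> 'v \<Rightarrow> bool) \<Rightarrow> 'v \<Rightarrow> nat" where
  "degree V E v = card {u \<in> V. E v u}"

definition regular :: "'v set \<Rightarrow> ('v \<Rightarrow> 'v \<Rightarrow> bool) \<Rightarrow> nat \<Rightarrow> bool" where
  "regular V E d \<longleftrightarrow> (\<forall>v\<in>V. degree V E v = d)"

definition connected_graph :: "'v set \<Rightarrow> ('v \<Rightarrow> 'v \<Rightarrow> bool) \<Rightarrow> bool" where
  "connected_graph V E \<longleftrightarrow> V \<noteq> {} \<and>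
     (\<forall>u\<in>V. \<forall>v\<in>V. (\<lambda>a b. a \<in> V \<and> b \<in> V \<and> E a b)\<^sup>*\<^sup>* u v)"

definition deformed_laplacian :: "'v set \<Rightarrow> ('v \<Rightarrow> 'v \<Rightarrow> bool) \<Rightarrow> real \<Rightarrow> 'v \<Rightarrow> 'v \<Rightarrow> real" where
  "deformed_laplacian V E s u v =
     (if u = v then 1 else 0) - s * adj_mat V E u v
     + s\<^sup>2 * (if u = v then real (degree V E u) - 1 else 0)"

text \<open>H-join: H has vertex set {1..r} and edges EH; graph i has vertex set VG i
  and edges EG i (vertex sets pairwise disjoint).\<close>

definition join_vertices :: "nat \<Rightarrow> (nat \<Rightarrow> 'v set) \<Rightarrow> 'v set" where
  "join_vertices r VG = (\<Union>i\<in>{1..r}. VG i)"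

definition join_edges :: "nat \<Rightarrow> (nat \<Rightarrow> nat \<Rightarrow> bool) \<Rightarrow> (nat \<Rightarrow> 'v set)
     \<Rightarrow> (nat \<Rightarrow> 'v \<Rightarrow> 'v \<Rightarrow> bool) \<Rightarrow> 'v \<Rightarrow> 'v \<Rightarrow> bool" where
  "join_edges r EH VG EG u v \<longleftrightarrow>
     (\<exists>i\<in>{1..r}. u \<in> VG i \<and> v \<in> VG i \<and> EG i u v) \<or>
     (\<exists>i\<in>{1..r}. \<exists>j\<in>{1..r}. EH i j \<and> u \<in> VG i \<and> v \<in> VG j)"

end

(* The vertex set of the join is partitioned into the blocks V(G_i).  Since every G_i is regular
   and two blocks are joined either completely or not at all, the deformed Laplacian M of the
   join has constant row sums between blocks (the quotient matrix K, which a diagonal similarity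
   turns into F_r(s)), constant off-diagonal blocks, and diagonal blocks M_i(s) with constant row
   and column sums.  In the basis formed by the block indicator vectors together with the
   vectors e_b - e_(v_i) (v_i a fixed vertex of block i), M becomes block diagonal: K acts on
   the indicators, and on each block M_i(s) acts on the vectors with zero sum, where its
   spectrum is that of M_i(s) with the row-sum eigenvalue lambda_1(M_i(s)) removed.  The
   spectrum of M_i(s) = c I - s A(G_i) is read off from that of A(G_i) by a Schur
   triangularization. *)

theory Submission
  imports Defs "Jordan_Normal_Form.Schur_Decomposition" "Jordan_Normal_Form.Jordan_Normal_Form_Uniqueness"
begin

section \<open>Characteristic polynomials of matrices indexed by finite sets\<close>

definition mat_enum :: "nat \<Rightarrow> (nat \<Rightarrow> 'v) \<Rightarrow> ('v \<Rightarrow> 'v \<Rightarrow> 'a) \<Rightarrow> 'a mat" where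
  "mat_enum n f M = mat n n (\<lambda>(a, b). M (f a) (f b))"

definition mult_on ::
    "'v set \<Rightarrow> ('v \<Rightarrow> 'v \<Rightarrow> 'a :: comm_semiring_0) \<Rightarrow> ('v \<Rightarrow> 'v \<Rightarrow> 'a) \<Rightarrow> 'v \<Rightarrow> 'v \<Rightarrow> 'a" where
  "mult_on V M N a b = (\<Sum>c\<in>V. M a c * N c b)"

definition char_poly_on :: "'v set \<Rightarrow> ('v \<Rightarrow> 'v \<Rightarrow> real) \<Rightarrow> real poly" where
  "char_poly_on V M = char_poly (mat_on V M)"

lemma sum_of_bool_eq_mult_left:
  fixes f :: "'a \<Rightarrow> 'b :: semiring_1"
  assumes "finite A" and "a \<in> A"
  shows "(\<Sum>x\<in>A. of_bool (a = x) * f x) = f a"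
proof -
  have "(\<Sum>x\<in>A. of_bool (a = x) * f x) = (\<Sum>x\<in>A. if a = x then f x else 0)"
    by (rule sum.cong) auto
  then show ?thesis using assms by simp
qed

lemma sum_mult_of_bool_eq_right:
  fixes f :: "'a \<Rightarrow> 'b :: semiring_1"
  assumes "finite A" and "a \<in> A"
  shows "(\<Sum>x\<in>A. f x * of_bool (x = a)) = f a"
proof -
  have "(\<Sum>x\<in>A. f x * of_bool (x = a)) = (\<Sum>x\<in>A. if x = a then f x else 0)"
    by (rule sum.cong) auto
  then show ?thesis using assms by simp
qed

lemma mat_enum_carrier [simp]: "mat_enum n f M \<in> carrier_mat n n"
  unfolding mat_enum_def by simp

lemma mat_on_eq_mat_enum: "mat_on V M = mat_enum (card V) (vertex_enum V) M"
  unfolding mat_on_def mat_enum_def ..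

lemma spec_on_eq_proots: "spec_on V M = proots (char_poly_on V M)"
  unfolding spec_on_def char_poly_on_def ..

lemma bij_betw_vertex_enum: "finite V \<Longrightarrow> bij_betw (vertex_enum V) {..<card V} V"
proof -
  assume "finite V"
  then obtain h where "bij_betw h {0..<card V} V" using ex_bij_betw_nat_finite by blast
  then have "\<exists>f. bij_betw f {..<card V} V" by (auto simp: lessThan_atLeast0)
  then show ?thesis unfolding vertex_enum_def by (rule someI_ex)
qed

lemma mat_enum_cong:
  assumes "bij_betw f {..<n} V" and "\<And>a b. a \<in> V \<Longrightarrow> b \<in> V \<Longrightarrow> M a b = M' a b"
  shows "mat_enum n f M = mat_enum n f M'"
proof -
  have "f a \<in> V" if "a < n" for a using assms(1) that bij_betwE by blast
  then show ?thesis unfolding mat_enum_def using assms(2) by (intro eq_matI) auto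
qed

lemma mat_enum_mult:
  assumes f: "bij_betw f {..<n} V"
  shows "mat_enum n f (mult_on V M N) = mat_enum n f M * mat_enum n f N"
proof (rule eq_matI)
  fix i j assume "i < dim_row (mat_enum n f M * mat_enum n f N)" "j < dim_col (mat_enum n f M * mat_enum n f N)"
  then have ij: "i < n" "j < n" by (auto simp: mat_enum_def)
  have "(mat_enum n f M * mat_enum n f N) $$ (i, j) = (\<Sum>k<n. M (f i) (f k) * N (f k) (f j))"
    using ij by (simp add: mat_enum_def scalar_prod_def atLeast0LessThan)
  also have "\<dots> = mult_on V M N (f i) (f j)"
    unfolding mult_on_def using sum.reindex_bij_betw[OF f] by simp
  finally show "mat_enum n f (mult_on V M N) $$ (i, j) = (mat_enum n f M * mat_enum n f N) $$ (i, j)"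
    using ij by (simp add: mat_enum_def)
qed (auto simp: mat_enum_def)

lemma mat_enum_one:
  assumes f: "bij_betw f {..<n} V"
  shows "mat_enum n f (\<lambda>a b. of_bool (a = b)) = 1\<^sub>m n"
proof -
  have "f i = f j \<longleftrightarrow> i = j" if "i < n" "j < n" for i j
    using f that unfolding bij_betw_def inj_on_def by auto
  then show ?thesis unfolding mat_enum_def by (intro eq_matI) auto
qed

lemma char_poly_mat_enum_similar:
  fixes M N P Q :: "'v \<Rightarrow> 'v \<Rightarrow> 'a :: field"
  assumes f: "bij_betw f {..<n} V"
    and inverse: "\<And>a b. a \<in> V \<Longrightarrow> b \<in> V \<Longrightarrow> mult_on V Q P a b = of_bool (a = b)"
    and intertwine: "\<And>a b. a \<in> V \<Longrightarrow> b \<in> V \<Longrightarrow> mult_on V M P a b = mult_on V P N a b"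
  shows "char_poly (mat_enum n f M) = char_poly (mat_enum n f N)"
proof -
  let ?M = "mat_enum n f M" and ?N = "mat_enum n f N" and ?P = "mat_enum n f P" and ?Q = "mat_enum n f Q"
  have "mat_enum n f (mult_on V Q P) = mat_enum n f (\<lambda>a b. of_bool (a = b))"
    by (rule mat_enum_cong[OF f inverse])
  then have QP: "?Q * ?P = 1\<^sub>m n"
    using mat_enum_mult[OF f, of Q P] mat_enum_one[OF f] by simp
  then have PQ: "?P * ?Q = 1\<^sub>m n"
    by (rule mat_mult_left_right_inverse[rotated 2]) auto
  have "mat_enum n f (mult_on V M P) = mat_enum n f (mult_on V P N)"
    by (rule mat_enum_cong[OF f intertwine])
  then have "?M * ?P = ?P * ?N"
    using mat_enum_mult[OF f, of M P] mat_enum_mult[OF f, of P N] by simp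
  have "?M = ?M * (?P * ?Q)" using PQ right_mult_one_mat[of ?M n n] by simp
  also have "\<dots> = ?M * ?P * ?Q" by (simp add: assoc_mult_mat[of _ n n _ n _ n])
  finally have M_eq: "?M = ?P * ?N * ?Q" using \<open>?M * ?P = ?P * ?N\<close> by simp
  have "similar_mat ?M ?N" by (rule similar_matI[OF _ PQ QP M_eq]) auto
  then show ?thesis by (rule char_poly_similar)
qed

lemma char_poly_mat_enum_indep:
  fixes M :: "'v \<Rightarrow> 'v \<Rightarrow> 'a :: field"
  assumes f: "bij_betw f {..<n} V" and g: "bij_betw g {..<n} V"
  shows "char_poly (mat_enum n f M) = char_poly (mat_enum n g M)"
proof -
  define \<sigma> where "\<sigma> = f \<circ> inv_into {..<n} g"
  have \<sigma>: "bij_betw \<sigma> V V"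
    unfolding \<sigma>_def using bij_betw_trans[OF bij_betw_inv_into[OF g] f] .
  have \<sigma>_g: "\<sigma> (g i) = f i" if "i < n" for i
    using g that by (simp add: \<sigma>_def bij_betw_def)
  have permuted: "mat_enum n f M = mat_enum n g (\<lambda>a b. M (\<sigma> a) (\<sigma> b))"
    by (intro eq_matI) (auto simp: mat_enum_def \<sigma>_g)
  have "char_poly (mat_enum n g M) = char_poly (mat_enum n g (\<lambda>a b. M (\<sigma> a) (\<sigma> b)))"
  proof (rule char_poly_mat_enum_similar[OF g])
    fix a b assume a: "a \<in> V" and b: "b \<in> V"
    have V: "finite V" using g bij_betw_finite by blast
    have \<sigma>V: "\<sigma> a \<in> V" "\<sigma> b \<in> V" and inj: "\<sigma> a = \<sigma> b \<longleftrightarrow> a = b"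
      using \<sigma> a b unfolding bij_betw_def inj_on_def by auto
    show "mult_on V (\<lambda>a b. of_bool (\<sigma> a = b)) (\<lambda>a b. of_bool (a = \<sigma> b)) a b = (of_bool (a = b) :: 'a)"
      unfolding mult_on_def by (subst sum_of_bool_eq_mult_left[OF V \<sigma>V(1)]) (use inj in simp)
    have "mult_on V (\<lambda>a b. of_bool (a = \<sigma> b)) (\<lambda>a b. M (\<sigma> a) (\<sigma> b)) a b
        = (\<Sum>c\<in>V. of_bool (a = c) * M c (\<sigma> b))"
      unfolding mult_on_def using sum.reindex_bij_betw[OF \<sigma>, of "\<lambda>c. of_bool (a = c) * M c (\<sigma> b)"] by simp
    then show "mult_on V M (\<lambda>a b. of_bool (a = \<sigma> b)) a b
        = mult_on V (\<lambda>a b. of_bool (a = \<sigma> b)) (\<lambda>a b. M (\<sigma> a) (\<sigma> b)) a b"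
      unfolding mult_on_def sum_mult_of_bool_eq_right[OF V \<sigma>V(2)] sum_of_bool_eq_mult_left[OF V a] by simp
  qed
  then show ?thesis using permuted by simp
qed

lemma char_poly_on_eq_mat_enum:
  assumes V: "finite V" and f: "bij_betw f {..<n} V"
  shows "char_poly_on V M = char_poly (mat_enum n f M)"
proof -
  have "n = card V" using bij_betw_same_card[OF f] by simp
  then show ?thesis
    unfolding char_poly_on_def mat_on_eq_mat_enum
    using char_poly_mat_enum_indep[OF bij_betw_vertex_enum[OF V]] f by simp
qed

lemma char_poly_on_cong:
  assumes "finite V" and "\<And>a b. a \<in> V \<Longrightarrow> b \<in> V \<Longrightarrow> M a b = M' a b"
  shows "char_poly_on V M = char_poly_on V M'"
  unfolding char_poly_on_def mat_on_eq_mat_enum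
  using mat_enum_cong[OF bij_betw_vertex_enum[OF assms(1)] assms(2)] by simp

lemma spec_on_cong:
  "finite V \<Longrightarrow> (\<And>a b. a \<in> V \<Longrightarrow> b \<in> V \<Longrightarrow> M a b = M' a b) \<Longrightarrow> spec_on V M = spec_on V M'"
  unfolding spec_on_eq_proots by (metis char_poly_on_cong)

lemma char_poly_on_similar:
  assumes "finite V"
    and "\<And>a b. a \<in> V \<Longrightarrow> b \<in> V \<Longrightarrow> mult_on V Q P a b = of_bool (a = b)"
    and "\<And>a b. a \<in> V \<Longrightarrow> b \<in> V \<Longrightarrow> mult_on V M P a b = mult_on V P N a b"
  shows "char_poly_on V M = char_poly_on V N"
  unfolding char_poly_on_def mat_on_eq_mat_enum
  using char_poly_mat_enum_similar[OF bij_betw_vertex_enum[OF assms(1)] assms(2,3)] .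

lemma char_poly_on_reindex:
  assumes W: "finite W" and h: "bij_betw h W V"
  shows "char_poly_on W (\<lambda>a b. M (h a) (h b)) = char_poly_on V M"
proof -
  have e: "bij_betw (h \<circ> vertex_enum W) {..<card W} V"
    using bij_betw_trans[OF bij_betw_vertex_enum[OF W] h] .
  have "char_poly_on W (\<lambda>a b. M (h a) (h b)) = char_poly (mat_enum (card W) (h \<circ> vertex_enum W) M)"
    unfolding char_poly_on_def mat_on_eq_mat_enum mat_enum_def by simp
  also have "\<dots> = char_poly_on V M"
    using char_poly_on_eq_mat_enum[OF bij_betw_finite[THEN iffD1, OF h W] e] by simp
  finally show ?thesis .
qed

lemma char_poly_on_diag_similar:
  assumes I: "finite I" and w: "\<And>i. i \<in> I \<Longrightarrow> w i \<noteq> 0"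
  shows "char_poly_on I (\<lambda>i j. w i * K i j / w j) = char_poly_on I K"
proof (rule char_poly_on_similar[OF I])
  have left: "mult_on I (\<lambda>a b. if a = b then x a else 0) X a b = x a * X a b" if "a \<in> I" for x X a b
  proof -
    have "mult_on I (\<lambda>a b. if a = b then x a else 0) X a b = (\<Sum>c\<in>I. if a = c then x a * X c b else 0)"
      unfolding mult_on_def by (rule sum.cong) auto
    then show ?thesis using I that by simp
  qed
  have right: "mult_on I X (\<lambda>a b. if a = b then x a else 0) a b = X a b * x b" if "b \<in> I" for x X a b
  proof -
    have "mult_on I X (\<lambda>a b. if a = b then x a else 0) a b = (\<Sum>c\<in>I. if c = b then X a b * x b else 0)"
      unfolding mult_on_def by (rule sum.cong) auto
    then show ?thesis using I that by simp
  qed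
  fix a b assume a: "a \<in> I" and b: "b \<in> I"
  show "mult_on I (\<lambda>a b. if a = b then inverse (w a) else 0) (\<lambda>a b. if a = b then w a else 0) a b = of_bool (a = b)"
    unfolding left[OF a] using w[OF a] by (cases "a = b") simp_all
  show "mult_on I (\<lambda>i j. w i * K i j / w j) (\<lambda>a b. if a = b then w a else 0) a b
      = mult_on I (\<lambda>a b. if a = b then w a else 0) K a b"
    unfolding left[OF a] right[OF b] using w[OF b] by simp
qed

lemma char_poly_on_monic: "finite V \<Longrightarrow> monic (char_poly_on V M)"
  and degree_char_poly_on: "finite V \<Longrightarrow> Polynomial.degree (char_poly_on V M) = card V"
  using degree_monic_char_poly[of "mat_on V M" "card V"] unfolding char_poly_on_def
  by (auto simp: mat_on_def)

lemma char_poly_on_nonzero: "finite V \<Longrightarrow> char_poly_on V M \<noteq> 0"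
  using char_poly_on_monic[of V M] by auto

lemma char_poly_on_empty: "char_poly_on {} M = 1"
proof -
  have "mat_on {} M \<in> carrier_mat 0 0" "upper_triangular (mat_on {} M)"
    by (auto simp: mat_on_def upper_triangular_def)
  then show ?thesis
    unfolding char_poly_on_def by (subst char_poly_upper_triangular) (auto simp: diag_mat_def mat_on_def)
qed

lemma char_poly_on_singleton: "char_poly_on {x} M = [:- M x x, 1:]"
proof -
  have "mat_on {x} M \<in> carrier_mat 1 1" "upper_triangular (mat_on {x} M)"
    by (auto simp: mat_on_def upper_triangular_def)
  moreover have "vertex_enum {x} 0 = x"
    using bij_betw_vertex_enum[of "{x}"] bij_betwE by fastforce
  ultimately show ?thesis
    unfolding char_poly_on_def by (subst char_poly_upper_triangular) (auto simp: diag_mat_def mat_on_def)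
qed

lemma char_poly_four_block_mat_upper_right_zero:
  fixes A1 :: "'a :: idom mat"
  assumes A1: "A1 \<in> carrier_mat n n" and A3: "A3 \<in> carrier_mat m n" and A4: "A4 \<in> carrier_mat m m"
  shows "char_poly (four_block_mat A1 (0\<^sub>m n m) A3 A4) = char_poly A1 * char_poly A4"
proof -
  let ?cm = "\<lambda>A. [:0, 1:] \<cdot>\<^sub>m 1\<^sub>m (dim_row A) + map_mat (\<lambda>a. [:- a:]) A"
  have "?cm (four_block_mat A1 (0\<^sub>m n m) A3 A4)
      = four_block_mat (?cm A1) (0\<^sub>m n m) (map_mat (\<lambda>a. [:- a:]) A3) (?cm A4)"
    using A1 A3 A4 by (intro eq_matI) (auto simp: one_poly_def)
  also have "det \<dots> = det (?cm A1) * det (?cm A4)"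
    using A1 A3 A4 by (intro det_four_block_mat_upper_right_zero[OF _ refl]) auto
  finally show ?thesis unfolding char_poly_defs .
qed

lemma bij_betw_concat_enum:
  fixes n1 n2 :: nat
  assumes f1: "bij_betw f1 {..<n1} V1" and f2: "bij_betw f2 {..<n2} V2" and disj: "V1 \<inter> V2 = {}"
  shows "bij_betw (\<lambda>k. if k < n1 then f1 k else f2 (k - n1)) {..<n1 + n2} (V1 \<union> V2)"
proof -
  let ?f = "\<lambda>k. if k < n1 then f1 k else f2 (k - n1)"
  have b1: "bij_betw ?f {..<n1} V1"
    using f1 by (rule bij_betw_cong[THEN iffD1, rotated]) auto
  have "bij_betw (\<lambda>k. k - n1) {n1..<n1 + n2} {..<n2}"
    by (rule bij_betw_byWitness[where f' = "\<lambda>k. k + n1"]) auto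
  then have "bij_betw (f2 \<circ> (\<lambda>k. k - n1)) {n1..<n1 + n2} V2"
    using f2 by (rule bij_betw_trans)
  then have b2: "bij_betw ?f {n1..<n1 + n2} V2"
    by (rule bij_betw_cong[THEN iffD1, rotated]) auto
  have "{..<n1} \<union> {n1..<n1 + n2} = {..<n1 + n2}" by auto
  then show ?thesis using bij_betw_combine[OF b1 b2 disj] by simp
qed

lemma char_poly_on_Un:
  assumes V1: "finite V1" and V2: "finite V2" and disj: "V1 \<inter> V2 = {}"
    and zero: "\<And>a b. a \<in> V1 \<Longrightarrow> b \<in> V2 \<Longrightarrow> M a b = 0"
  shows "char_poly_on (V1 \<union> V2) M = char_poly_on V1 M * char_poly_on V2 M"
proof -
  let ?n1 = "card V1" and ?n2 = "card V2" and ?f1 = "vertex_enum V1" and ?f2 = "vertex_enum V2"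
  have e1: "bij_betw ?f1 {..<?n1} V1" and e2: "bij_betw ?f2 {..<?n2} V2"
    using bij_betw_vertex_enum V1 V2 by blast+
  have "?f1 k \<in> V1" if "k < ?n1" for k using e1 that bij_betwE by blast
  moreover have "?f2 k \<in> V2" if "k < ?n2" for k using e2 that bij_betwE by blast
  ultimately have "mat_enum (?n1 + ?n2) (\<lambda>k. if k < ?n1 then ?f1 k else ?f2 (k - ?n1)) M
      = four_block_mat (mat_enum ?n1 ?f1 M) (0\<^sub>m ?n1 ?n2)
          (mat ?n2 ?n1 (\<lambda>(a, b). M (?f2 a) (?f1 b))) (mat_enum ?n2 ?f2 M)"
    by (intro eq_matI) (auto simp: mat_enum_def zero)
  then have "char_poly_on (V1 \<union> V2) M = char_poly (mat_enum ?n1 ?f1 M) * char_poly (mat_enum ?n2 ?f2 M)"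
    using char_poly_on_eq_mat_enum[OF _ bij_betw_concat_enum[OF e1 e2 disj]] V1 V2
      char_poly_four_block_mat_upper_right_zero[of "mat_enum ?n1 ?f1 M" ?n1 _ ?n2 "mat_enum ?n2 ?f2 M"]
    by simp
  then show ?thesis using char_poly_on_eq_mat_enum[OF V1 e1] char_poly_on_eq_mat_enum[OF V2 e2] by simp
qed

lemma char_poly_on_UN:
  assumes "finite I" and "\<And>i. i \<in> I \<Longrightarrow> finite (W i)"
    and "\<And>i j. i \<in> I \<Longrightarrow> j \<in> I \<Longrightarrow> i \<noteq> j \<Longrightarrow> W i \<inter> W j = {}"
    and "\<And>i j a b. i \<in> I \<Longrightarrow> j \<in> I \<Longrightarrow> i \<noteq> j \<Longrightarrow> a \<in> W i \<Longrightarrow> b \<in> W j \<Longrightarrow> M a b = 0"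
  shows "char_poly_on (\<Union>i\<in>I. W i) M = (\<Prod>i\<in>I. char_poly_on (W i) M)"
  using assms
proof (induction I rule: finite_induct)
  case empty
  then show ?case by (simp add: char_poly_on_empty)
next
  case (insert i I)
  have "char_poly_on (W i \<union> (\<Union>j\<in>I. W j)) M = char_poly_on (W i) M * char_poly_on (\<Union>j\<in>I. W j) M"
  proof (rule char_poly_on_Un)
    show "finite (W i)" "finite (\<Union>j\<in>I. W j)" using insert.prems(1) insert.hyps(1) by auto
    show "W i \<inter> (\<Union>j\<in>I. W j) = {}" using insert.prems(2) insert.hyps(2) by fastforce
    show "M a b = 0" if "a \<in> W i" "b \<in> (\<Union>j\<in>I. W j)" for a b
      using insert.prems(3) insert.hyps(2) that by fastforce
  qed
  also have "char_poly_on (\<Union>j\<in>I. W j) M = (\<Prod>j\<in>I. char_poly_on (W j) M)"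
  proof (rule insert.IH)
    show "M a b = 0" if "i' \<in> I" "j \<in> I" "i' \<noteq> j" "a \<in> W i'" "b \<in> W j" for i' j a b
      using insert.prems(3)[of i' j a b] that by blast
  qed (use insert.prems in auto)
  finally show ?case using insert.hyps by simp
qed

section \<open>Equitable partitions\<close>

(* Stronger than the usual notion (constant row sums K i j of the blocks): the off-diagonal
   blocks must also have constant rows, the diagonal blocks constant column sums. *)
locale equitable_partition =
  fixes I :: "'i set" and B :: "'i \<Rightarrow> 'v set" and M :: "'v \<Rightarrow> 'v \<Rightarrow> real" and K :: "'i \<Rightarrow> 'i \<Rightarrow> real"
  assumes finite_index: "finite I"
    and finite_block: "i \<in> I \<Longrightarrow> finite (B i)"
    and block_nonempty: "i \<in> I \<Longrightarrow> B i \<noteq> {}"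
    and blocks_disjoint: "i \<in> I \<Longrightarrow> j \<in> I \<Longrightarrow> i \<noteq> j \<Longrightarrow> B i \<inter> B j = {}"
    and row_sum: "i \<in> I \<Longrightarrow> j \<in> I \<Longrightarrow> a \<in> B i \<Longrightarrow> (\<Sum>b\<in>B j. M a b) = K i j"
    and off_diagonal_row_const:
      "i \<in> I \<Longrightarrow> j \<in> I \<Longrightarrow> i \<noteq> j \<Longrightarrow> a \<in> B i \<Longrightarrow> b \<in> B j \<Longrightarrow> b' \<in> B j \<Longrightarrow> M a b = M a b'"
    and column_sum: "i \<in> I \<Longrightarrow> b \<in> B i \<Longrightarrow> b' \<in> B i \<Longrightarrow> (\<Sum>a\<in>B i. M a b) = (\<Sum>a\<in>B i. M a b')"
begin

abbreviation V where "V \<equiv> \<Union>(B ` I)"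

definition rep :: "'i \<Rightarrow> 'v" where
  "rep i = (SOME a. a \<in> B i)"

definition block_of :: "'v \<Rightarrow> 'i" where
  "block_of a = (THE i. i \<in> I \<and> a \<in> B i)"

lemma finite_V: "finite V"
  using finite_index finite_block by blast

lemma rep_in_block: "i \<in> I \<Longrightarrow> rep i \<in> B i"
  unfolding rep_def using block_nonempty by (simp add: some_in_eq)

lemma block_of_eq: "i \<in> I \<Longrightarrow> a \<in> B i \<Longrightarrow> block_of a = i"
  unfolding block_of_def using blocks_disjoint by (intro the_equality) blast+

lemma block_of_in: "a \<in> V \<Longrightarrow> block_of a \<in> I"
  and in_block_of: "a \<in> V \<Longrightarrow> a \<in> B (block_of a)"
  using block_of_eq by auto

lemma block_of_rep [simp]: "i \<in> I \<Longrightarrow> block_of (rep i) = i"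
  using block_of_eq rep_in_block by blast

lemma card_block_pos: "i \<in> I \<Longrightarrow> real (card (B i)) > 0"
  using finite_block block_nonempty by (simp add: card_gt_0_iff)

lemma sum_of_bool_block_of:
  fixes X :: "'v \<Rightarrow> real"
  assumes i: "i \<in> I"
  shows "(\<Sum>c\<in>V. of_bool (block_of c = i) * X c) = (\<Sum>c\<in>B i. X c)"
proof -
  have "(\<Sum>c\<in>V. of_bool (block_of c = i) * X c) = (\<Sum>c\<in>V \<inter> {c. block_of c = i}. X c)"
    using finite_V by (rule sum_of_bool_mult_eq)
  also have "V \<inter> {c. block_of c = i} = B i"
    using i block_of_eq in_block_of by blast
  finally show ?thesis .
qed

(* Columns of basis: at a representative rep j the indicator of B j, at any other b in B j the
   vector e_b - e_(rep j).  The indicators span an M-invariant subspace on which M acts by K;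
   the other columns have zero sum on each block, and M maps them to vectors of the same kind
   supported on the same block (column_sum, off_diagonal_row_const).  So in this basis M
   becomes the block diagonal matrix collapsed. *)

definition basis :: "'v \<Rightarrow> 'v \<Rightarrow> real" where
  "basis a b = (if b = rep (block_of b) then of_bool (block_of a = block_of b)
     else of_bool (a = b) - of_bool (a = rep (block_of b)))"

definition basis_inv :: "'v \<Rightarrow> 'v \<Rightarrow> real" where
  "basis_inv a b = (if a = rep (block_of a) then of_bool (block_of b = block_of a) / card (B (block_of a))
     else of_bool (a = b) - of_bool (block_of b = block_of a) / card (B (block_of a)))"

definition collapsed :: "'v \<Rightarrow> 'v \<Rightarrow> real" where
  "collapsed a b = (if b = rep (block_of b)
     then (if a = rep (block_of a) then K (block_of a) (block_of b) else 0)
     else (if a \<noteq> rep (block_of a) \<and> block_of a = block_of b then M a b - M a (rep (block_of b)) else 0))"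

lemma sum_basis_block:
  assumes i: "i \<in> I" and b: "b \<in> V"
  shows "(\<Sum>c\<in>B i. basis c b) = (if b = rep (block_of b) \<and> block_of b = i then card (B i) else 0)"
proof (cases "b = rep (block_of b)")
  case True
  have "(\<Sum>c\<in>B i. basis c b) = (\<Sum>c\<in>B i. of_bool (i = block_of b))"
    using True block_of_eq[OF i] by (intro sum.cong) (auto simp: basis_def)
  then show ?thesis using True by auto
next
  case False
  have "b \<in> B i \<longleftrightarrow> rep (block_of b) \<in> B i"
    using b i block_of_in in_block_of rep_in_block block_of_eq by metis
  then have "(\<Sum>c\<in>B i. of_bool (c = b) - of_bool (c = rep (block_of b)) :: real) = 0"
    using finite_block[OF i] by (cases "b \<in> B i") (auto simp: sum_subtractf)
  moreover have "(\<Sum>c\<in>B i. basis c b) = (\<Sum>c\<in>B i. of_bool (c = b) - of_bool (c = rep (block_of b)))"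
    using False by (intro sum.cong) (auto simp: basis_def)
  ultimately show ?thesis using False by simp
qed

lemma basis_inv_basis:
  assumes a: "a \<in> V" and b: "b \<in> V"
  shows "mult_on V basis_inv basis a b = of_bool (a = b)"
proof -
  let ?i = "block_of a"
  let ?S = "\<Sum>c\<in>B ?i. basis c b"
  have i: "?i \<in> I" using block_of_in[OF a] .
  have n: "real (card (B ?i)) > 0" using card_block_pos[OF i] .
  show ?thesis
  proof (cases "a = rep ?i")
    case True
    have "mult_on V basis_inv basis a b = (\<Sum>c\<in>V. of_bool (block_of c = ?i) * basis c b) / card (B ?i)"
      unfolding mult_on_def basis_inv_def sum_divide_distrib using True by (intro sum.cong) auto
    also have "\<dots> = ?S / card (B ?i)"
      by (simp only: sum_of_bool_block_of[OF i])
    finally show ?thesis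
      using True n sum_basis_block[OF i b] block_of_rep[OF i] by auto
  next
    case False
    have "mult_on V basis_inv basis a b
        = (\<Sum>c\<in>V. of_bool (a = c) * basis c b) - (\<Sum>c\<in>V. of_bool (block_of c = ?i) * basis c b) / card (B ?i)"
      unfolding mult_on_def basis_inv_def using False
      by (simp add: sum_subtractf sum_divide_distrib left_diff_distrib)
    also have "\<dots> = basis a b - ?S / card (B ?i)"
      using sum_of_bool_eq_mult_left[OF finite_V a] sum_of_bool_block_of[OF i] by simp
    finally show ?thesis
      using False n sum_basis_block[OF i b] a b block_of_in in_block_of block_of_eq
      by (auto simp: basis_def)
  qed
qed

lemma rep_block_of_in_V: "a \<in> V \<Longrightarrow> rep (block_of a) \<in> V"
  using block_of_in rep_in_block by blast

lemma M_basis_rep_column: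
  assumes a: "a \<in> V" and j: "j \<in> I"
  shows "mult_on V M basis a (rep j) = K (block_of a) j"
proof -
  have "mult_on V M basis a (rep j) = (\<Sum>c\<in>V. of_bool (block_of c = j) * M a c)"
    unfolding mult_on_def basis_def using j by (intro sum.cong) auto
  also have "\<dots> = K (block_of a) j"
    using sum_of_bool_block_of[OF j] row_sum[OF block_of_in[OF a] j in_block_of[OF a]] by simp
  finally show ?thesis .
qed

lemma basis_collapsed_rep_column:
  assumes a: "a \<in> V" and j: "j \<in> I"
  shows "mult_on V basis collapsed a (rep j) = K (block_of a) j"
proof -
  have "basis a c * collapsed c (rep j) = of_bool (rep (block_of a) = c) * K (block_of a) j"
    if c: "c \<in> V" for c
    using block_of_rep[OF block_of_in[OF a]] block_of_rep[OF block_of_in[OF c]] j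
    by (auto simp: basis_def collapsed_def)
  then show ?thesis
    unfolding mult_on_def using sum_of_bool_eq_mult_left[OF finite_V rep_block_of_in_V[OF a]] by simp
qed

lemma M_basis_nonrep_column:
  assumes b: "b \<in> V" and nonrep: "b \<noteq> rep (block_of b)"
  shows "mult_on V M basis a b = M a b - M a (rep (block_of b))"
proof -
  have "mult_on V M basis a b = (\<Sum>c\<in>V. M a c * of_bool (c = b)) - (\<Sum>c\<in>V. M a c * of_bool (c = rep (block_of b)))"
    unfolding mult_on_def basis_def using nonrep by (simp add: sum_subtractf right_diff_distrib)
  then show ?thesis
    by (simp only: sum_mult_of_bool_eq_right[OF finite_V b] sum_mult_of_bool_eq_right[OF finite_V rep_block_of_in_V[OF b]])
qed

lemma sum_residual_column:
  assumes a: "a \<in> V" and j: "j \<in> I" and b: "b \<in> B j"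
  shows "(\<Sum>c\<in>B j - {rep j}. (of_bool (a = c) - of_bool (a = rep j)) * (M c b - M c (rep j)))
    = M a b - M a (rep j)"
proof -
  define G where "G c = M c b - M c (rep j)" for c
  let ?R = "B j - {rep j}"
  have "(\<Sum>c\<in>?R. (of_bool (a = c) - of_bool (a = rep j)) * G c) = G a"
  proof (cases "a \<in> ?R")
    case True
    have "(\<Sum>c\<in>?R. (of_bool (a = c) - of_bool (a = rep j)) * G c) = (\<Sum>c\<in>?R. of_bool (a = c) * G c)"
      using True by simp
    also have "\<dots> = G a" using True finite_block[OF j] by (intro sum_of_bool_eq_mult_left) auto
    finally show ?thesis .
  next
    case False
    show ?thesis
    proof (cases "a = rep j")
      case True
      have "(\<Sum>c\<in>B j. G c) = 0"
        using column_sum[OF j b rep_in_block[OF j]] by (simp add: G_def sum_subtractf)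
      then have "(\<Sum>c\<in>?R. G c) = - G a"
        using True finite_block[OF j] rep_in_block[OF j] by (simp add: sum_diff1)
      moreover have "(\<Sum>c\<in>?R. (of_bool (a = c) - of_bool (a = rep j)) * G c) = (\<Sum>c\<in>?R. - G c)"
        using True by (intro sum.cong) auto
      ultimately show ?thesis by (simp add: sum_negf)
    next
      case False
      then have "block_of a \<noteq> j" using \<open>a \<notin> ?R\<close> in_block_of[OF a] by auto
      then have "G a = 0"
        using off_diagonal_row_const[OF block_of_in[OF a] j _ in_block_of[OF a] b rep_in_block[OF j]]
        by (simp add: G_def)
      moreover have "(\<Sum>c\<in>?R. (of_bool (a = c) - of_bool (a = rep j)) * G c) = 0"
        using False \<open>a \<notin> ?R\<close> by (intro sum.neutral) auto
      ultimately show ?thesis by simp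
    qed
  qed
  then show ?thesis by (simp add: G_def)
qed

lemma basis_collapsed_nonrep_column:
  assumes a: "a \<in> V" and b: "b \<in> V" and nonrep: "b \<noteq> rep (block_of b)"
  shows "mult_on V basis collapsed a b = M a b - M a (rep (block_of b))"
proof -
  define j where "j = block_of b"
  let ?R = "B j - {rep j}"
  have j: "j \<in> I" and bj: "b \<in> B j" using block_of_in[OF b] in_block_of[OF b] by (auto simp: j_def)
  have "mult_on V basis collapsed a b = (\<Sum>c\<in>?R. basis a c * collapsed c b)"
    unfolding mult_on_def
  proof (rule sum.mono_neutral_right[OF finite_V])
    show "?R \<subseteq> V" using j by blast
    show "\<forall>c\<in>V - ?R. basis a c * collapsed c b = 0"
      using nonrep block_of_eq by (auto simp: collapsed_def j_def)
  qed
  also have "\<dots> = (\<Sum>c\<in>?R. (of_bool (a = c) - of_bool (a = rep j)) * (M c b - M c (rep j)))"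
    using nonrep block_of_eq[OF j] by (intro sum.cong) (auto simp: basis_def collapsed_def j_def)
  also have "\<dots> = M a b - M a (rep j)" by (rule sum_residual_column[OF a j bj])
  finally show ?thesis by (simp add: j_def)
qed

lemma M_basis_eq_basis_collapsed:
  assumes a: "a \<in> V" and b: "b \<in> V"
  shows "mult_on V M basis a b = mult_on V basis collapsed a b"
proof (cases "b = rep (block_of b)")
  case True
  then show ?thesis
    using M_basis_rep_column[OF a block_of_in[OF b]] basis_collapsed_rep_column[OF a block_of_in[OF b]] by simp
next
  case False
  then show ?thesis using M_basis_nonrep_column[OF b] basis_collapsed_nonrep_column[OF a b] by simp
qed

lemma char_poly_on_reps_collapsed: "char_poly_on (rep ` I) collapsed = char_poly_on I K"
proof -
  have "bij_betw rep I (rep ` I)" using block_of_rep by (intro inj_on_imp_bij_betw inj_on_inverseI)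
  then have "char_poly_on (rep ` I) collapsed = char_poly_on I (\<lambda>i j. collapsed (rep i) (rep j))"
    by (rule char_poly_on_reindex[OF finite_index, symmetric])
  also have "\<dots> = char_poly_on I K"
    by (rule char_poly_on_cong[OF finite_index]) (simp add: collapsed_def)
  finally show ?thesis .
qed

lemma char_poly_on_collapsed:
  "char_poly_on V collapsed
     = char_poly_on I K * (\<Prod>i\<in>I. char_poly_on (B i - {rep i}) (\<lambda>a b. M a b - M a (rep i)))"
proof -
  let ?D = "rep ` I"
  have D: "?D \<subseteq> V" using rep_in_block by blast
  have is_rep: "c \<in> ?D \<longleftrightarrow> c = rep (block_of c)" if "c \<in> V" for c
    using that block_of_in by force
  have "char_poly_on V collapsed = char_poly_on (?D \<union> (V - ?D)) collapsed"
    using D by (simp add: Un_absorb1)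
  also have "\<dots> = char_poly_on ?D collapsed * char_poly_on (V - ?D) collapsed"
  proof (rule char_poly_on_Un)
    show "finite ?D" "finite (V - ?D)" using finite_index finite_V by auto
    show "collapsed a b = 0" if "a \<in> ?D" "b \<in> V - ?D" for a b
      using that D is_rep by (auto simp: collapsed_def)
  qed auto
  also have "char_poly_on ?D collapsed = char_poly_on I K" by (rule char_poly_on_reps_collapsed)
  also have "V - ?D = (\<Union>i\<in>I. B i - {rep i})"
    using block_of_eq rep_in_block by fastforce
  also have "char_poly_on (\<Union>i\<in>I. B i - {rep i}) collapsed = (\<Prod>i\<in>I. char_poly_on (B i - {rep i}) collapsed)"
  proof (rule char_poly_on_UN[OF finite_index])
    show "finite (B i - {rep i})" if "i \<in> I" for i using finite_block[OF that] by simp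
    show "(B i - {rep i}) \<inter> (B j - {rep j}) = {}" if "i \<in> I" "j \<in> I" "i \<noteq> j" for i j
      using blocks_disjoint[OF that] by blast
    show "collapsed a b = 0"
      if "i \<in> I" "j \<in> I" "i \<noteq> j" "a \<in> B i - {rep i}" "b \<in> B j - {rep j}" for i j a b
      using that block_of_eq by (auto simp: collapsed_def)
  qed
  also have "\<dots> = (\<Prod>i\<in>I. char_poly_on (B i - {rep i}) (\<lambda>a b. M a b - M a (rep i)))"
  proof (intro prod.cong refl char_poly_on_cong)
    show "collapsed a b = M a b - M a (rep i)" if "i \<in> I" "a \<in> B i - {rep i}" "b \<in> B i - {rep i}" for i a b
      using that block_of_eq by (auto simp: collapsed_def)
  qed (use finite_block in auto)
  finally show ?thesis .
qed

theorem char_poly_on_collapse: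
  "char_poly_on V M
     = char_poly_on I K * (\<Prod>i\<in>I. char_poly_on (B i - {rep i}) (\<lambda>a b. M a b - M a (rep i)))"
proof -
  have "char_poly_on V M = char_poly_on V collapsed"
    using finite_V basis_inv_basis M_basis_eq_basis_collapsed by (rule char_poly_on_similar)
  then show ?thesis using char_poly_on_collapsed by simp
qed

lemma equitable_partition_subset:
  assumes J: "J \<subseteq> I"
  shows "equitable_partition J B M K"
proof
  show "finite J" using finite_subset[OF J finite_index] .
  show "finite (B i)" if "i \<in> J" for i
    by (rule finite_block) (use that J in auto)
  show "B i \<noteq> {}" if "i \<in> J" for i
    by (rule block_nonempty) (use that J in auto)
  show "B i \<inter> B j = {}" if "i \<in> J" "j \<in> J" "i \<noteq> j" for i j
    by (rule blocks_disjoint) (use that J in auto)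
  show "(\<Sum>b\<in>B j. M a b) = K i j" if "i \<in> J" "j \<in> J" "a \<in> B i" for i j a
    by (rule row_sum) (use that J in auto)
  show "M a b = M a b'" if "i \<in> J" "j \<in> J" "i \<noteq> j" "a \<in> B i" "b \<in> B j" "b' \<in> B j" for i j a b b'
    by (rule off_diagonal_row_const) (use that J in auto)
  show "(\<Sum>a\<in>B i. M a b) = (\<Sum>a\<in>B i. M a b')" if "i \<in> J" "b \<in> B i" "b' \<in> B i" for i b b'
    by (rule column_sum) (use that J in auto)
qed

corollary char_poly_on_block:
  assumes i: "i \<in> I"
  shows "char_poly_on (B i) M = [:- K i i, 1:] * char_poly_on (B i - {rep i}) (\<lambda>a b. M a b - M a (rep i))"
proof -
  interpret single: equitable_partition "{i}" B M K
    using i by (intro equitable_partition_subset) simp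
  show ?thesis using single.char_poly_on_collapse by (simp add: char_poly_on_singleton)
qed

corollary proots_char_poly_on_collapse:
  "proots (char_poly_on V M) = proots (char_poly_on I K) + (\<Sum>i\<in>I. proots (char_poly_on (B i) M) - {#K i i#})"
proof -
  let ?R = "\<lambda>i. char_poly_on (B i - {rep i}) (\<lambda>a b. M a b - M a (rep i))"
  have R: "?R i \<noteq> 0" if "i \<in> I" for i using finite_block[OF that] by (simp add: char_poly_on_nonzero)
  have "proots (char_poly_on (B i) M) - {#K i i#} = proots (?R i)" if "i \<in> I" for i
    unfolding char_poly_on_block[OF that] by (subst proots_mult) (use R[OF that] in auto)
  then show ?thesis
    using char_poly_on_collapse finite_index R char_poly_on_nonzero[OF finite_index]
    by (simp add: proots_mult proots_prod)
qed

end

section \<open>The spectrum of \<open>c I - s A\<close>\<close>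

lemma prod_linear_proots_eq:
  fixes p :: "'a :: idom poly"
  assumes "monic p" and "size (proots p) = Polynomial.degree p"
  shows "(\<Prod>x\<in>#proots p. [:- x, 1:]) = p"
  using assms
proof (induction "Polynomial.degree p" arbitrary: p)
  case 0
  then have "p = [:coeff p 0:]" using degree_0_id[of p] by simp
  also have "coeff p 0 = 1" using 0 by simp
  finally show ?case by (simp add: one_pCons)
next
  case (Suc k)
  then have "proots p \<noteq> {#}" by auto
  then obtain x where x: "x \<in># proots p" by blast
  have p0: "p \<noteq> 0" using Suc.prems by auto
  then have "poly p x = 0" using x by simp
  then obtain q where q: "p = [:- x, 1:] * q" using poly_eq_0_iff_dvd by (metis dvdE)
  have q0: "q \<noteq> 0" using p0 q by auto
  have "Polynomial.degree p = Polynomial.degree [:- x, 1:] + Polynomial.degree q"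
    unfolding q by (rule degree_mult_eq) (use q0 in auto)
  then have dq: "Polynomial.degree q = k" using Suc.hyps(2) by simp
  have mq: "monic q" using Suc.prems(1) unfolding q lead_coeff_mult by simp
  have "proots p = proots [:- x, 1:] + proots q"
    unfolding q by (rule proots_mult) (use q0 in auto)
  then have pr: "proots p = add_mset x (proots q)" by simp
  have "(\<Prod>x\<in>#proots q. [:- x, 1:]) = q"
    using Suc.hyps(1)[OF dq[symmetric] mq] Suc.prems(2) pr dq Suc.hyps(2) by simp
  then show ?case using q pr by simp
qed

lemma proots_prod_list_linear: "proots (\<Prod>x\<leftarrow>xs. [:- x, 1:]) = mset (xs :: 'a :: idom list)"
proof (induction xs)
  case (Cons a xs)
  have "(\<Prod>x\<leftarrow>xs. [:- x, 1:]) \<noteq> 0"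
    by (subst prod_list_zero_iff) auto
  then have "proots (\<Prod>x\<leftarrow>a # xs. [:- x, 1:]) = proots [:- a, 1:] + proots (\<Prod>x\<leftarrow>xs. [:- x, 1:])"
    unfolding list.map prod_list.Cons by (intro proots_mult) auto
  then show ?case using Cons.IH by simp
qed simp

lemma char_poly_affine:
  fixes A :: "'a :: conjugatable_ordered_field mat"
  assumes A: "A \<in> carrier_mat n n" and split: "char_poly A = (\<Prod>e\<leftarrow>es. [:- e, 1:])"
  shows "char_poly (c \<cdot>\<^sub>m 1\<^sub>m n + (- s) \<cdot>\<^sub>m A) = (\<Prod>e\<leftarrow>es. [:- (c - s * e), 1:])"
proof -
  obtain B P Q where "schur_decomposition A es = (B, P, Q)" by (cases "schur_decomposition A es")
  from schur_decomposition[OF A split this]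
  have wit: "similar_mat_wit A B P Q" and ut: "upper_triangular B" and diag: "diag_mat B = es" by auto
  have B: "B \<in> carrier_mat n n" using similar_mat_witD2[OF A wit] by auto
  have "similar_mat_wit (char_matrix ((- s) \<cdot>\<^sub>m A) (- c)) (char_matrix ((- s) \<cdot>\<^sub>m B) (- c)) P Q"
    by (intro similar_mat_wit_char_matrix similar_mat_wit_smult wit)
  moreover have "char_matrix ((- s) \<cdot>\<^sub>m A) (- c) = c \<cdot>\<^sub>m 1\<^sub>m n + (- s) \<cdot>\<^sub>m A"
    using A by (intro eq_matI) (auto simp: char_matrix_def)
  ultimately have "similar_mat (c \<cdot>\<^sub>m 1\<^sub>m n + (- s) \<cdot>\<^sub>m A) (char_matrix ((- s) \<cdot>\<^sub>m B) (- c))"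
    unfolding similar_mat_def by auto
  then have "char_poly (c \<cdot>\<^sub>m 1\<^sub>m n + (- s) \<cdot>\<^sub>m A) = char_poly (char_matrix ((- s) \<cdot>\<^sub>m B) (- c))"
    by (rule char_poly_similar)
  also have "\<dots> = (\<Prod>e\<leftarrow>diag_mat (char_matrix ((- s) \<cdot>\<^sub>m B) (- c)). [:- e, 1:])"
    using B ut by (intro char_poly_upper_triangular[of _ n]) (auto simp: upper_triangular_def char_matrix_def)
  also have "diag_mat (char_matrix ((- s) \<cdot>\<^sub>m B) (- c)) = map (\<lambda>e. c - s * e) es"
    using B diag by (intro nth_equalityI) (auto simp: diag_mat_def char_matrix_def)
  finally show ?thesis by (simp add: comp_def)
qed

(* spec_on only collects real roots, so the size hypothesis says that the characteristic
   polynomial of A splits over the reals. *)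
lemma spec_on_affine:
  assumes V: "finite V" and split: "size (spec_on V A) = card V"
  shows "spec_on V (\<lambda>a b. (if a = b then c else 0) - s * A a b) = image_mset (\<lambda>x. c - s * x) (spec_on V A)"
proof -
  obtain es where es: "mset es = spec_on V A" using ex_mset by blast
  have "char_poly (mat_on V A) = (\<Prod>x\<in>#spec_on V A. [:- x, 1:])"
    using prod_linear_proots_eq[of "char_poly_on V A"] char_poly_on_monic[OF V] degree_char_poly_on[OF V] split
    by (simp add: spec_on_eq_proots char_poly_on_def)
  also have "\<dots> = (\<Prod>e\<leftarrow>es. [:- e, 1:])"
    unfolding es[symmetric] by (simp only: mset_map[symmetric] prod_mset_prod_list)
  finally have "char_poly (c \<cdot>\<^sub>m 1\<^sub>m (card V) + (- s) \<cdot>\<^sub>m mat_on V A)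
      = (\<Prod>e\<leftarrow>es. [:- (c - s * e), 1:])"
    by (intro char_poly_affine) (auto simp: mat_on_def)
  moreover have "mat_on V (\<lambda>a b. (if a = b then c else 0) - s * A a b)
      = c \<cdot>\<^sub>m 1\<^sub>m (card V) + (- s) \<cdot>\<^sub>m mat_on V A"
    using bij_betw_vertex_enum[OF V] unfolding bij_betw_def inj_on_def
    by (intro eq_matI) (auto simp: mat_on_def)
  ultimately have "spec_on V (\<lambda>a b. (if a = b then c else 0) - s * A a b) = mset (map (\<lambda>e. c - s * e) es)"
    using proots_prod_list_linear[of "map (\<lambda>e. c - s * e) es"] by (simp add: spec_on_def comp_def)
  then show ?thesis using es by simp
qed

section \<open>The deformed Laplacian of an \<open>H\<close>-join\<close>

locale H_join =
  fixes r :: nat and EH :: "nat \<Rightarrow> nat \<Rightarrow> bool"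
    and VG :: "nat \<Rightarrow> 'v set" and EG :: "nat \<Rightarrow> 'v \<Rightarrow> 'v \<Rightarrow> bool"
  assumes H_irrefl: "i \<in> {1..r} \<Longrightarrow> \<not> EH i i"
    and G_simple: "i \<in> {1..r} \<Longrightarrow> simple_graph (VG i) (EG i)"
    and VG_disjoint: "i \<in> {1..r} \<Longrightarrow> j \<in> {1..r} \<Longrightarrow> i \<noteq> j \<Longrightarrow> VG i \<inter> VG j = {}"
begin

abbreviation N :: "nat \<Rightarrow> nat" where
  "N i \<equiv> \<Sum>j\<in>{j \<in> {1..r}. EH i j}. card (VG j)"

abbreviation join_laplacian :: "real \<Rightarrow> 'v \<Rightarrow> 'v \<Rightarrow> real" where
  "join_laplacian s \<equiv> deformed_laplacian (join_vertices r VG) (join_edges r EH VG EG) s"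

lemma finite_VG: "i \<in> {1..r} \<Longrightarrow> finite (VG i)"
  using G_simple unfolding simple_graph_def by blast

lemma mem_VG_iff: "i \<in> {1..r} \<Longrightarrow> k \<in> {1..r} \<Longrightarrow> u \<in> VG i \<Longrightarrow> u \<in> VG k \<longleftrightarrow> k = i"
  using VG_disjoint by blast

lemma join_edges_iff:
  assumes i: "i \<in> {1..r}" and j: "j \<in> {1..r}" and u: "u \<in> VG i" and w: "w \<in> VG j"
  shows "join_edges r EH VG EG u w \<longleftrightarrow> (if i = j then EG i u w else EH i j)"
proof -
  have "join_edges r EH VG EG u w \<longleftrightarrow> (i = j \<and> EG i u w) \<or> EH i j"
    unfolding join_edges_def
    using mem_VG_iff[OF i _ u] mem_VG_iff[OF j _ w] i j by (auto cong: rev_conj_cong)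
  then show ?thesis using H_irrefl[OF i] by auto
qed

lemma degree_join:
  assumes i: "i \<in> {1..r}" and u: "u \<in> VG i"
  shows "degree (join_vertices r VG) (join_edges r EH VG EG) u = degree (VG i) (EG i) u + N i"
proof -
  let ?E = "join_edges r EH VG EG"
  have "{w \<in> join_vertices r VG. ?E u w} = (\<Union>j\<in>{1..r}. {w \<in> VG j. ?E u w})"
    unfolding join_vertices_def by blast
  then have "card {w \<in> join_vertices r VG. ?E u w} = (\<Sum>j\<in>{1..r}. card {w \<in> VG j. ?E u w})"
    using finite_VG VG_disjoint by (simp add: card_UN_disjoint disjoint_iff)
  also have "\<dots> = (\<Sum>j\<in>{1..r}. of_bool (i = j) * degree (VG i) (EG i) u + of_bool (EH i j) * card (VG j))"
  proof (rule sum.cong)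
    fix j assume j: "j \<in> {1..r}"
    have "{w \<in> VG j. ?E u w} = (if i = j then {w \<in> VG i. EG i u w} else if EH i j then VG j else {})"
      using join_edges_iff[OF i j u] by auto
    then show "card {w \<in> VG j. ?E u w} = of_bool (i = j) * degree (VG i) (EG i) u + of_bool (EH i j) * card (VG j)"
      using H_irrefl[OF i] by (auto simp: degree_def)
  qed simp
  also have "\<dots> = (\<Sum>j\<in>{1..r}. of_bool (i = j) * degree (VG i) (EG i) u) + (\<Sum>j\<in>{1..r}. of_bool (EH i j) * card (VG j))"
    by (rule sum.distrib)
  also have "(\<Sum>j\<in>{1..r}. of_bool (i = j) * degree (VG i) (EG i) u) = degree (VG i) (EG i) u"
    by (rule sum_of_bool_eq_mult_left) (use i in auto)
  also have "(\<Sum>j\<in>{1..r}. of_bool (EH i j) * card (VG j)) = N i"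
    by (simp add: Int_def)
  finally show ?thesis unfolding degree_def .
qed

lemma join_laplacian_eq:
  assumes i: "i \<in> {1..r}" and j: "j \<in> {1..r}" and u: "u \<in> VG i" and w: "w \<in> VG j"
  shows "join_laplacian s u w
    = (if u = w then s\<^sup>2 * (real (degree (VG i) (EG i) u) + real (N i) - 1) + 1 else 0)
      - s * of_bool (if i = j then EG i u w else EH i j)"
proof -
  have "\<not> EG i u u" using G_simple[OF i] u unfolding simple_graph_def by blast
  moreover have "u = w \<Longrightarrow> i = j" using mem_VG_iff[OF j i w] u by blast
  ultimately show ?thesis
    unfolding deformed_laplacian_def adj_mat_def join_edges_iff[OF i j u w] degree_join[OF i u]
    by (auto simp: algebra_simps)
qed

end

locale regular_H_join = H_join +
  fixes d :: "nat \<Rightarrow> nat"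
  assumes VG_nonempty: "i \<in> {1..r} \<Longrightarrow> VG i \<noteq> {}"
    and G_regular: "i \<in> {1..r} \<Longrightarrow> regular (VG i) (EG i) (d i)"
begin

definition quotient_mat :: "real \<Rightarrow> nat \<Rightarrow> nat \<Rightarrow> real" where
  "quotient_mat s i j = (if i = j then s\<^sup>2 * (real (d i) + real (N i) - 1) - s * real (d i) + 1
     else (if EH i j then - s else 0) * real (card (VG j)))"

lemma card_neighbours:
  assumes i: "i \<in> {1..r}" and u: "u \<in> VG i"
  shows "card {w \<in> VG i. EG i u w} = d i" and "card {w \<in> VG i. EG i w u} = d i"
proof -
  show "card {w \<in> VG i. EG i u w} = d i"
    using G_regular[OF i] u unfolding regular_def degree_def by blast
  moreover have "{w \<in> VG i. EG i w u} = {w \<in> VG i. EG i u w}"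
    using G_simple[OF i] u unfolding simple_graph_def by blast
  ultimately show "card {w \<in> VG i. EG i w u} = d i" by simp
qed

lemma join_laplacian_regular_eq:
  assumes i: "i \<in> {1..r}" and j: "j \<in> {1..r}" and u: "u \<in> VG i" and w: "w \<in> VG j"
  shows "join_laplacian s u w
    = (if u = w then s\<^sup>2 * (real (d i) + real (N i) - 1) + 1 else 0)
      - s * of_bool (if i = j then EG i u w else EH i j)"
proof -
  have deg: "degree (VG i) (EG i) u = d i" using G_regular[OF i] u unfolding regular_def by blast
  show ?thesis using join_laplacian_eq[OF assms, unfolded deg] .
qed

lemma sum_join_laplacian_diagonal_block:
  assumes i: "i \<in> {1..r}" and u: "u \<in> VG i"
  shows "(\<Sum>w\<in>VG i. join_laplacian s u w) = quotient_mat s i i"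
    and "(\<Sum>w\<in>VG i. join_laplacian s w u) = quotient_mat s i i"
proof -
  have fin: "finite (VG i)" using finite_VG[OF i] .
  show "(\<Sum>w\<in>VG i. join_laplacian s u w) = quotient_mat s i i"
    using join_laplacian_regular_eq[OF i i u] card_neighbours(1)[OF i u] fin u
    by (simp add: sum_subtractf quotient_mat_def sum_distrib_left[symmetric] Int_def)
  show "(\<Sum>w\<in>VG i. join_laplacian s w u) = quotient_mat s i i"
    using join_laplacian_regular_eq[OF i i _ u] card_neighbours(2)[OF i u] fin u
    by (simp add: sum_subtractf quotient_mat_def sum_distrib_left[symmetric] Int_def)
qed

lemma equitable_partition_join_laplacian:
  "equitable_partition {1..r} VG (join_laplacian s) (quotient_mat s)"
proof
  fix i j a b b'
  assume i: "i \<in> {1..r}" and j: "j \<in> {1..r}"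
  show "(\<Sum>b\<in>VG j. join_laplacian s a b) = quotient_mat s i j" if a: "a \<in> VG i"
  proof (cases "i = j")
    case False
    have "(\<Sum>b\<in>VG j. join_laplacian s a b) = (\<Sum>b\<in>VG j. - s * of_bool (EH i j))"
      using join_laplacian_regular_eq[OF i j a] VG_disjoint[OF i j False] a False by (intro sum.cong) auto
    then show ?thesis using False by (simp add: quotient_mat_def)
  qed (use sum_join_laplacian_diagonal_block(1)[OF i a] in simp)
  show "join_laplacian s a b = join_laplacian s a b'"
    if "i \<noteq> j" "a \<in> VG i" "b \<in> VG j" "b' \<in> VG j"
    using that join_laplacian_regular_eq[OF i j] VG_disjoint[OF i j] by auto
qed (use finite_VG VG_nonempty VG_disjoint sum_join_laplacian_diagonal_block(2) in auto)

lemma spec_on_join_laplacian_block: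
  assumes i: "i \<in> {1..r}"
    and eig: "spec_on (VG i) (adj_mat (VG i) (EG i)) = image_mset lam (mset_set {1..card (VG i)})"
    and eig1: "lam 1 = real (d i)"
  shows "spec_on (VG i) (join_laplacian s) - {#quotient_mat s i i#}
    = image_mset (\<lambda>k. s\<^sup>2 * (real (d i) + real (N i) - 1) - s * lam k + 1) (mset_set {2..card (VG i)})"
proof -
  let ?c = "s\<^sup>2 * (real (d i) + real (N i) - 1) + 1"
  have "card (VG i) \<ge> 1"
    using finite_VG[OF i] VG_nonempty[OF i] by (simp add: Suc_le_eq card_gt_0_iff)
  then have "{1..card (VG i)} = insert 1 {2..card (VG i)}" by auto
  then have one_to_n: "mset_set {1..card (VG i)} = add_mset 1 (mset_set {2..card (VG i)})" by simp
  have "spec_on (VG i) (join_laplacian s)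
      = spec_on (VG i) (\<lambda>a b. (if a = b then ?c else 0) - s * adj_mat (VG i) (EG i) a b)"
    using finite_VG[OF i] join_laplacian_regular_eq[OF i i] by (intro spec_on_cong) (auto simp: adj_mat_def)
  also have "\<dots> = image_mset (\<lambda>x. ?c - s * x) (spec_on (VG i) (adj_mat (VG i) (EG i)))"
    using finite_VG[OF i] eig by (intro spec_on_affine) auto
  also have "\<dots> = add_mset (quotient_mat s i i) (image_mset (\<lambda>k. ?c - s * lam k) (mset_set {2..card (VG i)}))"
    unfolding eig one_to_n using eig1 by (simp add: quotient_mat_def image_mset.compositionality comp_def)
  finally show ?thesis by (simp add: algebra_simps)
qed

lemma spec_on_quotient_mat_symmetric:
  "spec_on {1..r} (\<lambda>i j. if i = j then s\<^sup>2 * (real (d i) + real (N i) - 1) - s * real (d i) + 1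
       else (if EH i j then - s else 0) * sqrt (real (card (VG i)) * real (card (VG j))))
   = spec_on {1..r} (quotient_mat s)"
proof -
  let ?w = "\<lambda>i. sqrt (real (card (VG i)))"
  have w: "?w i > 0" if "i \<in> {1..r}" for i
    using finite_VG[OF that] VG_nonempty[OF that] by (simp add: card_gt_0_iff)
  have "spec_on {1..r} (\<lambda>i j. if i = j then s\<^sup>2 * (real (d i) + real (N i) - 1) - s * real (d i) + 1
       else (if EH i j then - s else 0) * sqrt (real (card (VG i)) * real (card (VG j))))
    = spec_on {1..r} (\<lambda>i j. ?w i * quotient_mat s i j / ?w j)"
  proof (rule spec_on_cong)
    fix i j assume "i \<in> {1..r}" "j \<in> {1..r}"
    have "?w i * (x * real (card (VG j))) / ?w j = x * sqrt (real (card (VG i)) * real (card (VG j)))" for x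
    proof -
      have "?w i * (x * real (card (VG j))) / ?w j = x * ?w i * (real (card (VG j)) / ?w j)" by simp
      then show ?thesis by (simp add: real_div_sqrt real_sqrt_mult)
    qed
    then show "(if i = j then s\<^sup>2 * (real (d i) + real (N i) - 1) - s * real (d i) + 1
       else (if EH i j then - s else 0) * sqrt (real (card (VG i)) * real (card (VG j))))
      = ?w i * quotient_mat s i j / ?w j"
      using w \<open>i \<in> {1..r}\<close> by (auto simp: quotient_mat_def)
  qed simp
  also have "\<dots> = spec_on {1..r} (quotient_mat s)"
    unfolding spec_on_eq_proots using w by (subst char_poly_on_diag_similar) auto
  finally show ?thesis .
qed

end

theorem theorem6p4:
  fixes r :: nat and EH :: "nat \<Rightarrow> nat \<Rightarrow> bool"
    and VG :: "nat \<Rightarrow> 'v set" and EG :: "nat \<Rightarrow> 'v \<Rightarrow> 'v \<Rightarrow> bool"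
    and d :: "nat \<Rightarrow> nat" and lam :: "nat \<Rightarrow> nat \<Rightarrow> real" and s :: real
  assumes H: "simple_graph {1..r} EH" "connected_graph {1..r} EH"
    and Gi: "\<And>i. i \<in> {1..r} \<Longrightarrow> simple_graph (VG i) (EG i)"
    and nonempty: "\<And>i. i \<in> {1..r} \<Longrightarrow> VG i \<noteq> {}"
    and reg: "\<And>i. i \<in> {1..r} \<Longrightarrow> regular (VG i) (EG i) (d i)"
    and disj: "\<And>i j. i \<in> {1..r} \<Longrightarrow> j \<in> {1..r} \<Longrightarrow> i \<noteq> j \<Longrightarrow> VG i \<inter> VG j = {}"
    and eig: "\<And>i. i \<in> {1..r} \<Longrightarrow>
       spec_on (VG i) (adj_mat (VG i) (EG i)) = image_mset (lam i) (mset_set {1..card (VG i)})"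
    and eig1: "\<And>i. i \<in> {1..r} \<Longrightarrow> lam i 1 = real (d i)"
  shows
    "let n = (\<lambda>i. card (VG i));
         N = (\<lambda>i. \<Sum>j\<in>{j \<in> {1..r}. EH i j}. n j);
         lam1M = (\<lambda>i. s\<^sup>2 * (real (d i) + real (N i) - 1) - s * real (d i) + 1);
         F = (\<lambda>i j. if i = j then lam1M i
                     else (if EH i j then - s else 0) * sqrt (real (n i) * real (n j)))
     in spec_on (join_vertices r VG) (deformed_laplacian (join_vertices r VG) (join_edges r EH VG EG) s)
        = (\<Sum>i\<in>{1..r}. image_mset (\<lambda>k. s\<^sup>2 * (real (d i) + real (N i) - 1) - s * lam i k + 1)
                                    (mset_set {2..n i}))
          + spec_on {1..r} F"
proof -
  interpret regular_H_join r EH VG EG d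
    using H(1) Gi disj nonempty reg by unfold_locales (auto simp: simple_graph_def)
  interpret ep: equitable_partition "{1..r}" VG "join_laplacian s" "quotient_mat s"
    by (rule equitable_partition_join_laplacian)
  have "spec_on (join_vertices r VG) (join_laplacian s)
      = spec_on {1..r} (quotient_mat s) + (\<Sum>i\<in>{1..r}. spec_on (VG i) (join_laplacian s) - {#quotient_mat s i i#})"
    using ep.proots_char_poly_on_collapse by (simp add: spec_on_eq_proots join_vertices_def)
  also have "(\<Sum>i\<in>{1..r}. spec_on (VG i) (join_laplacian s) - {#quotient_mat s i i#})
      = (\<Sum>i\<in>{1..r}. image_mset (\<lambda>k. s\<^sup>2 * (real (d i) + real (N i) - 1) - s * lam i k + 1)
                                    (mset_set {2..card (VG i)}))"
  proof (rule sum.cong)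
    fix i assume i: "i \<in> {1..r}"
    show "spec_on (VG i) (join_laplacian s) - {#quotient_mat s i i#}
      = image_mset (\<lambda>k. s\<^sup>2 * (real (d i) + real (N i) - 1) - s * lam i k + 1) (mset_set {2..card (VG i)})"
      using spec_on_join_laplacian_block[OF i eig[OF i] eig1[OF i]] .
  qed simp
  finally show ?thesis
    unfolding Let_def spec_on_quotient_mat_symmetric by (simp add: add.commute)
qed

end
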